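(* Let $I$ be an ideal on a cardinal $\kappa$ and $\theta$ a regular cardinal. The following are equivalent: (1) $I$ is weakly $\theta$-saturated and $\theta$-indecomposable. (2) Whenever $\langle B_i:i<\theta\rangle$ is a $\subseteq$-increasing sequence of subsets of $\kappa$, there is $i^*<\theta$ such that $B_i=_I\bigcup_{j<\theta}B_j$ for all $i$ with $i^*\leq i<\theta$. (3) Whenever $\langle A_i:i<\theta\rangle$ is a sequence of $I$-positive subsets of $\kappa$, $\bigcap_{i<\theta}\bigcup_{i\leq j<\theta}A_j\neq\emptyset$.
   Context: By an ideal on a cardinal $\kappa$ we mean a proper ideal on $\kappa$ containing all bounded subsets of $\kappa$. $I$-positive means not in $I$; $A=_I B$ means $A\setminus B,B\setminus A\in I$. $I$ is weakly $\theta$-saturated if there is no partition of $\kappa$ into $\theta$ pairwise disjoint $I$-positive sets. $I$ is $\theta$-indecomposable if whenever $\langle A_i:i<\theta\rangle$ are subsets of $\kappa$ with $\bigcup_{i<\theta}A_i\notin I$, there is $w\subseteq\theta$ with $|w|<\theta$ and $\bigcup_{i\in w}A_i\notin I$. *)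

theory Defs
  imports Main
begin

text \<open>A cardinal \<kappa> is represented by a cardinal-order relation r (the well-order of the
initial ordinal), with \<kappa> = Field r.  Subsets of \<kappa> are subsets of Field r.\<close>

definition bounded_in :: "'a rel \<Rightarrow> 'a set \<Rightarrow> bool" where
  "bounded_in r A \<longleftrightarrow> (\<exists>\<alpha>\<in>Field r. A \<subseteq> underS r \<alpha>)"

definition ideal_on :: "'a rel \<Rightarrow> 'a set set \<Rightarrow> bool" where
  "ideal_on r I \<longleftrightarrow>
     I \<subseteq> Pow (Field r) \<and>
     {} \<in> I \<and>
     (\<forall>A\<in>I. \<forall>B. B \<subseteq> A \<longrightarrow> B \<in> I) \<and>
     (\<forall>A\<in>I. \<forall>B\<in>I. A \<union> B \<in> I) \<and>
     Field r \<notin> I \<and>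
     (\<forall>A. A \<subseteq> Field r \<and> bounded_in r A \<longrightarrow> A \<in> I)"

definition I_positive :: "'a rel \<Rightarrow> 'a set set \<Rightarrow> 'a set \<Rightarrow> bool" where
  "I_positive r I A \<longleftrightarrow> A \<subseteq> Field r \<and> A \<notin> I"

definition I_eq :: "'a set set \<Rightarrow> 'a set \<Rightarrow> 'a set \<Rightarrow> bool" where
  "I_eq I A B \<longleftrightarrow> A - B \<in> I \<and> B - A \<in> I"

definition weakly_saturated :: "'a rel \<Rightarrow> 'a set set \<Rightarrow> 'b rel \<Rightarrow> bool" where
  "weakly_saturated r I t \<longleftrightarrow>
     \<not> (\<exists>P :: 'b \<Rightarrow> 'a set.
          (\<forall>i\<in>Field t. I_positive r I (P i)) \<and>
          (\<forall>i\<in>Field t. \<forall>j\<in>Field t. i \<noteq> j \<longrightarrow> P i \<inter> P j = {}) \<and>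
          (\<Union>i\<in>Field t. P i) = Field r)"

definition indecomposable :: "'a rel \<Rightarrow> 'a set set \<Rightarrow> 'b rel \<Rightarrow> bool" where
  "indecomposable r I t \<longleftrightarrow>
     (\<forall>A :: 'b \<Rightarrow> 'a set.
        (\<forall>i\<in>Field t. A i \<subseteq> Field r) \<and> (\<Union>i\<in>Field t. A i) \<notin> I \<longrightarrow>
        (\<exists>w. w \<subseteq> Field t \<and> (card_of w, t) \<in> ordLess \<and> (\<Union>i\<in>w. A i) \<notin> I))"

end

theory Submission
  imports Defs
begin

(* (2) and (3) are complementary.  If an increasing sequence B_i with union U does not
   stabilise modulo I, the sets U - B_i are I-positive with empty limsup; if positive sets
   A_i have empty limsup, the increasing sets kappa - (UN j>=i. A_j) cannot stabilise.
   Condition (3) rules out theta disjoint positive sets, since a point of the limsup lies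
   in two of them, and applied to U - (UN j<=i. A_j) it rules out a positive union all of
   whose subunions of size < theta are null.
   Conversely, assume (1) and let the decreasing positive sets C_i = (UN j>=i. A_j) have
   empty intersection.  Indecomposability and the regularity of theta give, for every b,
   an a with C_b - C_a positive.  By weak saturation a maximal disjoint family of positive
   sets that each miss some C_j has fewer than theta members, so all of them miss a single
   C_b; but then C_b - C_a could be added to the family. *)

unbundle cardinal_syntax

lemma Card_order_refl: "Card_order t \<Longrightarrow> i \<in> Field t \<Longrightarrow> (i, i) \<in> t"
  using card_order_on_well_order_on wo_rel.REFL wo_rel_def refl_onD by metis

lemma Card_order_trans: "Card_order t \<Longrightarrow> (i, j) \<in> t \<Longrightarrow> (j, k) \<in> t \<Longrightarrow> (i, k) \<in> t"
  using card_order_on_well_order_on wo_rel.TRANS wo_rel_def transE by metis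

lemma Card_order_antisym: "Card_order t \<Longrightarrow> (i, j) \<in> t \<Longrightarrow> (j, i) \<in> t \<Longrightarrow> i = j"
  using card_order_on_well_order_on wo_rel.ANTISYM wo_rel_def antisymD by metis

lemma regularCard_bounded:
  assumes t: "Card_order t" "regularCard t" and K: "K \<subseteq> Field t" "|K| <o t"
  shows "\<exists>a\<in>Field t. \<forall>k\<in>K. (k, a) \<in> t"
proof -
  have "relChain t (under t)"
    unfolding relChain_def under_def using Card_order_trans[OF t(1)] by blast
  moreover have "K \<subseteq> (\<Union>i\<in>Field t. under t i)"
    using K(1) Card_order_refl[OF t(1)] unfolding under_def by blast
  ultimately obtain a where "a \<in> Field t" "K \<subseteq> under t a"
    using regularCard_UNION[OF t _ _ K(2)] by blast
  then show ?thesis unfolding under_def by blast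
qed

lemma card_of_under_ordLess:
  assumes t: "Cinfinite t" and i: "i \<in> Field t"
  shows "|under t i| <o t"
proof -
  have "under t i = underS t i \<union> {i}"
    using Refl_under_underS[OF _ i] card_order_on_well_order_on t
    unfolding well_order_on_def linear_order_on_def partial_order_on_def preorder_on_def
    by blast
  moreover have "|{i}| <o t"
    by (intro Cfinite_ordLess_Cinfinite[OF _ t]) (simp add: cfinite_def card_of_card_order_on Field_card_of)
  ultimately show ?thesis
    using Un_Cinfinite_bound_strict card_of_underS[OF _ i] t by metis
qed

lemma ideal_on_subset: "ideal_on r I \<Longrightarrow> A \<in> I \<Longrightarrow> B \<subseteq> A \<Longrightarrow> B \<in> I"
  unfolding ideal_on_def by blast

lemma ideal_on_Un: "ideal_on r I \<Longrightarrow> A \<in> I \<Longrightarrow> B \<in> I \<Longrightarrow> A \<union> B \<in> I"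
  unfolding ideal_on_def by blast

lemma ideal_on_empty: "ideal_on r I \<Longrightarrow> {} \<in> I"
  unfolding ideal_on_def by blast

lemma maximal_disjoint_subfamily:
  obtains M where "M \<subseteq> S" "pairwise disjnt M"
    "\<And>D. D \<in> S \<Longrightarrow> \<forall>E\<in>M. disjnt D E \<Longrightarrow> D \<in> M"
proof -
  define F where "F = {M. M \<subseteq> S \<and> pairwise disjnt M}"
  have "\<forall>C\<in>chains F. \<Union>C \<in> F"
    unfolding F_def chains_def by (auto intro: pairwise_chain_Union)
  then obtain M where M: "M \<in> F" and max: "\<forall>M'\<in>F. M \<subseteq> M' \<longrightarrow> M' = M"
    using Zorn_Lemma by blast
  have "D \<in> M" if "D \<in> S" "\<forall>E\<in>M. disjnt D E" for D
  proof -
    have "insert D M \<in> F"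
      using M that unfolding F_def by (auto simp: pairwise_insert disjnt_sym)
    then show ?thesis using max by blast
  qed
  then show ?thesis using M that unfolding F_def by blast
qed

lemma indecomposable_positive_chain_member:
  assumes t: "Card_order t" "regularCard t" and I: "ideal_on r I" "indecomposable r I t"
    and As: "\<forall>i\<in>Field t. As i \<subseteq> Field r"
      "\<forall>i\<in>Field t. \<forall>j\<in>Field t. (i, j) \<in> t \<longrightarrow> As i \<subseteq> As j"
    and pos: "(\<Union>i\<in>Field t. As i) \<notin> I"
  shows "\<exists>a\<in>Field t. As a \<notin> I"
proof -
  obtain w where w: "w \<subseteq> Field t" "|w| <o t" "(\<Union>i\<in>w. As i) \<notin> I"
    using I(2)[unfolded indecomposable_def, rule_format, of As] As(1) pos by blast
  obtain a where a: "a \<in> Field t" "\<forall>k\<in>w. (k, a) \<in> t"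
    using regularCard_bounded[OF t w(1,2)] by blast
  have "(\<Union>i\<in>w. As i) \<subseteq> As a" using a w(1) As(2) by blast
  then show ?thesis using a(1) w(3) ideal_on_subset[OF I(1)] by blast
qed

lemma weakly_saturated_disjoint_family_ordLess:
  assumes t: "Card_order t" "Field t \<noteq> {}" and I: "ideal_on r I" "weakly_saturated r I t"
    and M: "\<forall>D\<in>M. I_positive r I D" "pairwise disjnt M"
  shows "|M| <o t"
proof (rule ccontr)
  assume "\<not> |M| <o t"
  then have "|Field t| \<le>o |M|"
    using card_of_Field_ordIso[OF t(1)] not_ordLess_iff_ordLeq ordIso_ordLeq_trans
      card_order_on_well_order_on[OF t(1)] card_of_Well_order by blast
  then obtain f where f: "inj_on f (Field t)" "f ` Field t \<subseteq> M"
    using card_of_ordLeq by metis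
  have f_pos: "f i \<subseteq> Field r" "f i \<notin> I" if "i \<in> Field t" for i
    using f(2) M(1) that unfolding I_positive_def by blast+
  have disj: "f i \<inter> f j = {}" if "i \<in> Field t" "j \<in> Field t" "i \<noteq> j" for i j
  proof -
    have "f i \<noteq> f j" using f(1) that unfolding inj_on_def by blast
    then show ?thesis using M(2) f(2) that unfolding pairwise_def disjnt_def by blast
  qed
  obtain i0 where i0: "i0 \<in> Field t" using t(2) by blast
  define P where
    "P i = (if i = i0 then Field r - (\<Union>j\<in>Field t - {i0}. f j) else f i)" for i
  have "f i \<subseteq> P i" "P i \<subseteq> Field r" if "i \<in> Field t" for i
    using that f_pos(1) disj[OF that] unfolding P_def by auto
  then have "\<forall>i\<in>Field t. I_positive r I (P i)"
    using f_pos(2) ideal_on_subset[OF I(1)] unfolding I_positive_def by blast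
  moreover have "\<forall>i\<in>Field t. \<forall>j\<in>Field t. i \<noteq> j \<longrightarrow> P i \<inter> P j = {}"
    using disj unfolding P_def by auto
  moreover have "(\<Union>i\<in>Field t. P i) = Field r"
    using i0 f_pos(1) unfolding P_def by auto
  ultimately show False using I(2) unfolding weakly_saturated_def by blast
qed

lemma indecomposable_decreasing_gap:
  assumes t: "Card_order t" "regularCard t" and I: "ideal_on r I" "indecomposable r I t"
    and C: "\<forall>i\<in>Field t. \<forall>j\<in>Field t. (i, j) \<in> t \<longrightarrow> C j \<subseteq> C i"
      "(\<Inter>i\<in>Field t. C i) = {}"
    and b: "b \<in> Field t" "I_positive r I (C b)"
  shows "\<exists>a\<in>Field t. C b - C a \<notin> I"
proof -
  have "\<forall>i\<in>Field t. C b - C i \<subseteq> Field r"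
    using b(2) unfolding I_positive_def by blast
  moreover have "\<forall>i\<in>Field t. \<forall>j\<in>Field t. (i, j) \<in> t \<longrightarrow> C b - C i \<subseteq> C b - C j"
    using C(1) by blast
  moreover have "(\<Union>j\<in>Field t. C b - C j) = C b" using C(2) b(1) by blast
  then have "(\<Union>j\<in>Field t. C b - C j) \<notin> I" using b(2) unfolding I_positive_def by simp
  ultimately show ?thesis by (rule indecomposable_positive_chain_member[OF t I])
qed

lemma saturated_indecomposable_decreasing_Inter_nonempty:
  assumes t: "Card_order t" "regularCard t"
    and I: "ideal_on r I" "weakly_saturated r I t" "indecomposable r I t"
    and C: "\<forall>i\<in>Field t. I_positive r I (C i)"
      "\<forall>i\<in>Field t. \<forall>j\<in>Field t. (i, j) \<in> t \<longrightarrow> C j \<subseteq> C i"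
  shows "(\<Inter>i\<in>Field t. C i) \<noteq> {}"
proof
  assume empty: "(\<Inter>i\<in>Field t. C i) = {}"
  then have "Field t \<noteq> {}" by auto
  define Good where "Good = {D. I_positive r I D \<and> (\<exists>j\<in>Field t. D \<inter> C j = {})}"
  obtain M where M: "M \<subseteq> Good" "pairwise disjnt M"
    and max: "\<And>D. D \<in> Good \<Longrightarrow> \<forall>E\<in>M. disjnt D E \<Longrightarrow> D \<in> M"
    using maximal_disjoint_subfamily[of Good] by blast
  have "|M| <o t"
    using weakly_saturated_disjoint_family_ordLess[OF t(1) \<open>Field t \<noteq> {}\<close> I(1,2) _ M(2)] M(1)
    unfolding Good_def by blast
  have "\<forall>D\<in>M. \<exists>j. j \<in> Field t \<and> D \<inter> C j = {}" using M(1) unfolding Good_def by blast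
  then obtain jf where jf: "\<forall>D\<in>M. jf D \<in> Field t \<and> D \<inter> C (jf D) = {}"
    by metis
  have "jf ` M \<subseteq> Field t" using jf by blast
  moreover have "|jf ` M| <o t" using card_of_image \<open>|M| <o t\<close> ordLeq_ordLess_trans by blast
  ultimately have "\<exists>b\<in>Field t. \<forall>k\<in>jf ` M. (k, b) \<in> t" by (rule regularCard_bounded[OF t])
  then obtain b where b: "b \<in> Field t" "\<forall>k\<in>jf ` M. (k, b) \<in> t" by blast
  obtain a where a: "a \<in> Field t" "C b - C a \<notin> I"
    using indecomposable_decreasing_gap[OF t I(1,3) C(2) empty b(1)] C(1) b(1) by blast
  have inside: "C b - C a \<subseteq> C (jf D)" if "D \<in> M" for D
    using b C(2) jf that by blast
  have "C b - C a \<in> Good"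
    using a C(1) b(1) unfolding Good_def I_positive_def by blast
  moreover have disj: "\<forall>D\<in>M. disjnt (C b - C a) D"
    using inside jf unfolding disjnt_def by blast
  ultimately have "C b - C a \<in> M" by (rule max)
  then have "disjnt (C b - C a) (C b - C a)" by (rule bspec[OF disj])
  then show False using a(2) ideal_on_empty[OF I(1)] by (metis disjnt_self_iff_empty)
qed

definition set_limsup :: "'b rel \<Rightarrow> ('b \<Rightarrow> 'a set) \<Rightarrow> 'a set" where
  "set_limsup t A = (\<Inter>i\<in>Field t. \<Union>j\<in>{j\<in>Field t. (i, j) \<in> t}. A j)"

lemma in_set_limsup_iff:
  "x \<in> set_limsup t A \<longleftrightarrow> (\<forall>i\<in>Field t. \<exists>j\<in>Field t. (i, j) \<in> t \<and> x \<in> A j)"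
  unfolding set_limsup_def by blast

definition positive_limsup_nonempty :: "'a rel \<Rightarrow> 'a set set \<Rightarrow> 'b rel \<Rightarrow> bool" where
  "positive_limsup_nonempty r I t \<longleftrightarrow>
     (\<forall>A :: 'b \<Rightarrow> 'a set. (\<forall>i\<in>Field t. I_positive r I (A i)) \<longrightarrow> set_limsup t A \<noteq> {})"

definition increasing_sets_stabilize :: "'a rel \<Rightarrow> 'a set set \<Rightarrow> 'b rel \<Rightarrow> bool" where
  "increasing_sets_stabilize r I t \<longleftrightarrow>
     (\<forall>B :: 'b \<Rightarrow> 'a set.
        (\<forall>i\<in>Field t. B i \<subseteq> Field r) \<and>
        (\<forall>i\<in>Field t. \<forall>j\<in>Field t. (i, j) \<in> t \<longrightarrow> B i \<subseteq> B j) \<longrightarrow>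
        (\<exists>istar\<in>Field t. \<forall>i\<in>Field t. (istar, i) \<in> t \<longrightarrow>
             I_eq I (B i) (\<Union>j\<in>Field t. B j)))"

lemma positive_limsup_nonemptyD:
  "positive_limsup_nonempty r I t \<Longrightarrow> \<forall>i\<in>Field t. I_positive r I (A i) \<Longrightarrow>
    \<exists>x. x \<in> set_limsup t A"
  unfolding positive_limsup_nonempty_def by blast

lemma saturated_indecomposable_imp_positive_limsup_nonempty:
  fixes r :: "'a rel" and t :: "'b rel"
  assumes t: "Card_order t" "regularCard t"
    and I: "ideal_on r I" "weakly_saturated r I t" "indecomposable r I t"
  shows "positive_limsup_nonempty r I t"
  unfolding positive_limsup_nonempty_def
proof (intro allI impI)
  fix A :: "'b \<Rightarrow> 'a set"
  assume A: "\<forall>i\<in>Field t. I_positive r I (A i)"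
  define C where "C i = (\<Union>j\<in>{j\<in>Field t. (i, j) \<in> t}. A j)" for i
  have "\<forall>i\<in>Field t. I_positive r I (C i)"
  proof
    fix i assume i: "i \<in> Field t"
    have "A i \<subseteq> C i" using i Card_order_refl[OF t(1) i] unfolding C_def by blast
    moreover have "C i \<subseteq> Field r" using A unfolding C_def I_positive_def by blast
    ultimately show "I_positive r I (C i)"
      using A i ideal_on_subset[OF I(1)] unfolding I_positive_def by blast
  qed
  moreover have "\<forall>i\<in>Field t. \<forall>j\<in>Field t. (i, j) \<in> t \<longrightarrow> C j \<subseteq> C i"
    unfolding C_def using Card_order_trans[OF t(1)] by blast
  ultimately have "(\<Inter>i\<in>Field t. C i) \<noteq> {}"
    by (rule saturated_indecomposable_decreasing_Inter_nonempty[OF t I])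
  then show "set_limsup t A \<noteq> {}" unfolding set_limsup_def C_def .
qed

lemma positive_limsup_nonempty_imp_weakly_saturated:
  fixes r :: "'a rel" and t :: "'b rel"
  assumes t: "Cinfinite t" and lim: "positive_limsup_nonempty r I t"
  shows "weakly_saturated r I t"
  unfolding weakly_saturated_def
proof
  assume "\<exists>P :: 'b \<Rightarrow> 'a set. (\<forall>i\<in>Field t. I_positive r I (P i)) \<and>
      (\<forall>i\<in>Field t. \<forall>j\<in>Field t. i \<noteq> j \<longrightarrow> P i \<inter> P j = {}) \<and> (\<Union>i\<in>Field t. P i) = Field r"
  then obtain P :: "'b \<Rightarrow> 'a set" where pos: "\<forall>i\<in>Field t. I_positive r I (P i)"
    and disj: "\<forall>i\<in>Field t. \<forall>j\<in>Field t. i \<noteq> j \<longrightarrow> P i \<inter> P j = {}"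
    by blast
  obtain x where x: "x \<in> set_limsup t P" using positive_limsup_nonemptyD[OF lim pos] by blast
  have "Field t \<noteq> {}" using t unfolding cinfinite_def by auto
  then obtain j0 where j0: "j0 \<in> Field t" "x \<in> P j0" using x unfolding in_set_limsup_iff by blast
  obtain i where i: "i \<in> Field t" "(j0, i) \<in> t" "j0 \<noteq> i"
    using infinite_Card_order_limit[OF _ _ j0(1)] t unfolding cinfinite_def by blast
  obtain j where j: "j \<in> Field t" "(i, j) \<in> t" "x \<in> P j"
    using x i(1) unfolding in_set_limsup_iff by blast
  have "j \<noteq> j0" using Card_order_antisym[OF _ i(2)] i(3) j(2) t by blast
  then show False using disj j j0 by blast
qed

lemma positive_limsup_nonempty_imp_indecomposable:
  fixes r :: "'a rel" and t :: "'b rel"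
  assumes t: "Cinfinite t" and I: "ideal_on r I" and lim: "positive_limsup_nonempty r I t"
  shows "indecomposable r I t"
  unfolding indecomposable_def
proof (intro allI impI)
  fix A :: "'b \<Rightarrow> 'a set"
  assume A: "(\<forall>i\<in>Field t. A i \<subseteq> Field r) \<and> (\<Union>i\<in>Field t. A i) \<notin> I"
  define U where "U = (\<Union>i\<in>Field t. A i)"
  show "\<exists>w. w \<subseteq> Field t \<and> |w| <o t \<and> (\<Union>i\<in>w. A i) \<notin> I"
  proof (rule ccontr)
    assume "\<not> ?thesis"
    then have no_small: "(\<Union>i\<in>w. A i) \<in> I" if "w \<subseteq> Field t" "|w| <o t" for w
      using that by blast
    define N where "N i = (\<Union>j\<in>under t i. A j)" for i
    have "N i \<in> I" if "i \<in> Field t" for i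
      unfolding N_def using no_small[OF under_Field card_of_under_ordLess[OF t that]] .
    then have "\<forall>i\<in>Field t. I_positive r I (U - N i)"
      using A ideal_on_Un[OF I] ideal_on_subset[OF I, of "N _ \<union> (U - N _)" U]
      unfolding U_def I_positive_def by blast
    then have "\<exists>x. x \<in> set_limsup t (\<lambda>i. U - N i)"
      by (rule positive_limsup_nonemptyD[OF lim])
    then obtain x where x: "x \<in> set_limsup t (\<lambda>i. U - N i)" by blast
    have "Field t \<noteq> {}" using t unfolding cinfinite_def by auto
    then have "x \<in> U" using x unfolding in_set_limsup_iff by blast
    then obtain k where k: "k \<in> Field t" "x \<in> A k" unfolding U_def by blast
    then show False using x unfolding in_set_limsup_iff N_def under_def by blast
  qed
qed

lemma increasing_sets_stabilize_imp_positive_limsup_nonempty: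
  fixes r :: "'a rel" and t :: "'b rel"
  assumes t: "Card_order t" and I: "ideal_on r I" and stab: "increasing_sets_stabilize r I t"
  shows "positive_limsup_nonempty r I t"
  unfolding positive_limsup_nonempty_def
proof (intro allI impI notI)
  fix A :: "'b \<Rightarrow> 'a set"
  assume A: "\<forall>i\<in>Field t. I_positive r I (A i)" and empty: "set_limsup t A = {}"
  define B where "B i = Field r - (\<Union>j\<in>{j\<in>Field t. (i, j) \<in> t}. A j)" for i
  have "\<forall>i\<in>Field t. B i \<subseteq> Field r" unfolding B_def by blast
  moreover have "\<forall>i\<in>Field t. \<forall>j\<in>Field t. (i, j) \<in> t \<longrightarrow> B i \<subseteq> B j"
    unfolding B_def using Card_order_trans[OF t] by blast
  ultimately obtain istar where istar: "istar \<in> Field t"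
    "\<forall>i\<in>Field t. (istar, i) \<in> t \<longrightarrow> I_eq I (B i) (\<Union>j\<in>Field t. B j)"
    using stab[unfolded increasing_sets_stabilize_def, rule_format, of B] by blast
  have "(\<Union>j\<in>Field t. B j) = Field r"
    using empty istar(1) unfolding B_def set_limsup_def by blast
  then have "Field r - B istar \<in> I"
    using istar Card_order_refl[OF t istar(1)] unfolding I_eq_def by metis
  moreover have "A istar \<subseteq> Field r - B istar"
    using A istar(1) Card_order_refl[OF t istar(1)] unfolding B_def I_positive_def by blast
  ultimately show False
    using A istar(1) ideal_on_subset[OF I] unfolding I_positive_def by blast
qed

lemma positive_limsup_nonempty_imp_increasing_sets_stabilize:
  fixes r :: "'a rel" and t :: "'b rel"
  assumes t: "Field t \<noteq> {}" and I: "ideal_on r I" and lim: "positive_limsup_nonempty r I t"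
  shows "increasing_sets_stabilize r I t"
  unfolding increasing_sets_stabilize_def
proof (intro allI impI)
  fix B :: "'b \<Rightarrow> 'a set"
  assume B: "(\<forall>i\<in>Field t. B i \<subseteq> Field r) \<and>
    (\<forall>i\<in>Field t. \<forall>j\<in>Field t. (i, j) \<in> t \<longrightarrow> B i \<subseteq> B j)"
  define U where "U = (\<Union>j\<in>Field t. B j)"
  show "\<exists>istar\<in>Field t. \<forall>i\<in>Field t. (istar, i) \<in> t \<longrightarrow> I_eq I (B i) U"
  proof (rule ccontr)
    assume unstable: "\<not> ?thesis"
    have "\<forall>i\<in>Field t. I_positive r I (U - B i)"
    proof
      fix i assume i: "i \<in> Field t"
      obtain i' where i': "i' \<in> Field t" "(i, i') \<in> t" "\<not> I_eq I (B i') U"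
        using unstable i by blast
      have "B i' - U = {}" using i'(1) unfolding U_def by blast
      then have "U - B i' \<notin> I" using i'(3) ideal_on_empty[OF I] unfolding I_eq_def by metis
      moreover have "U - B i' \<subseteq> U - B i" using B i i' by blast
      ultimately show "I_positive r I (U - B i)"
        using B ideal_on_subset[OF I] unfolding U_def I_positive_def by blast
    qed
    then have "\<exists>x. x \<in> set_limsup t (\<lambda>i. U - B i)" by (rule positive_limsup_nonemptyD[OF lim])
    then obtain x where x: "x \<in> set_limsup t (\<lambda>i. U - B i)" by blast
    then have "x \<in> U" using t unfolding in_set_limsup_iff by blast
    then obtain k where k: "k \<in> Field t" "x \<in> B k" unfolding U_def by blast
    then show False using x B unfolding in_set_limsup_iff by blast
  qed
qed

theorem proposition2p3:
  fixes r :: "'a rel" and t :: "'b rel" and I :: "'a set set"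
  assumes kappa: "Card_order r"
    and ideal: "ideal_on r I"
    and theta: "Card_order t" "Cinfinite t" "regularCard t"
  shows
    "(weakly_saturated r I t \<and> indecomposable r I t
       \<longleftrightarrow>
     (\<forall>B :: 'b \<Rightarrow> 'a set.
        (\<forall>i\<in>Field t. B i \<subseteq> Field r) \<and>
        (\<forall>i\<in>Field t. \<forall>j\<in>Field t. (i, j) \<in> t \<longrightarrow> B i \<subseteq> B j) \<longrightarrow>
        (\<exists>istar\<in>Field t. \<forall>i\<in>Field t. (istar, i) \<in> t \<longrightarrow>
             I_eq I (B i) (\<Union>j\<in>Field t. B j))))
     \<and>
     (weakly_saturated r I t \<and> indecomposable r I t
       \<longleftrightarrow>
     (\<forall>A :: 'b \<Rightarrow> 'a set.
        (\<forall>i\<in>Field t. I_positive r I (A i)) \<longrightarrow>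
        (\<Inter>i\<in>Field t. \<Union>j\<in>{j\<in>Field t. (i, j) \<in> t}. A j) \<noteq> {}))"
proof -
  have "Field t \<noteq> {}" using theta(2) unfolding cinfinite_def by auto
  have "weakly_saturated r I t \<and> indecomposable r I t \<longleftrightarrow> positive_limsup_nonempty r I t"
  proof
    assume "weakly_saturated r I t \<and> indecomposable r I t"
    then show "positive_limsup_nonempty r I t"
      using saturated_indecomposable_imp_positive_limsup_nonempty[OF theta(1,3) ideal] by simp
  next
    assume "positive_limsup_nonempty r I t"
    then show "weakly_saturated r I t \<and> indecomposable r I t"
      using positive_limsup_nonempty_imp_weakly_saturated[OF theta(2)]
        positive_limsup_nonempty_imp_indecomposable[OF theta(2) ideal] by simp
  qed
  moreover have "increasing_sets_stabilize r I t \<longleftrightarrow> positive_limsup_nonempty r I t"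
    using increasing_sets_stabilize_imp_positive_limsup_nonempty[OF theta(1) ideal]
      positive_limsup_nonempty_imp_increasing_sets_stabilize[OF \<open>Field t \<noteq> {}\<close> ideal]
    by (rule iffI)
  ultimately show ?thesis
    unfolding increasing_sets_stabilize_def positive_limsup_nonempty_def set_limsup_def
    by (simp only:)
qed

end
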